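(* Fix $a,b,\kappa>0$ and let $p(s)=a+bs$. For $\alpha>0$ set $p_1=\frac{\kappa}{1+\alpha}p$ and $p_2=\alpha p_1$ (i.e. $a_1=\frac{\kappa a}{1+\alpha}$, $b_1=\frac{\kappa b}{1+\alpha}$, $a_2=\alpha a_1$, $b_2=\alpha b_1$). Then there exists $\bar\alpha>0$ such that for every $\alpha>\bar\alpha$, the function $C_1$ defined in the context satisfies $\sup_{\omega\ge0}|C_1(j\omega)|<1$. (Indeed $\sup_\omega|C_1(j\omega)|\to 0$ as $\alpha\to\infty$.)
   Context: For constants $a_1,b_1,a_2,b_2>0$ and complex $s$, set $p_1(s)=a_1+b_1 s$, $p_2(s)=a_2+b_2 s$, $q=p_1+p_2$, and $m(s)=(s^2+q)\sqrt{1-\frac{4p_1p_2}{(s^2+q)^2}}$ with $\sqrt{\cdot}$ the principal complex square root (nonnegative real part), so $m^2=(s^2+q)^2-4p_1p_2$. Define $C_1=\frac{(s^2+q)-m}{2p_2}$. $j$ denotes the imaginary unit. *)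

theory Defs
  imports "HOL-Analysis.Analysis"
begin

definition p_lin :: "real \<Rightarrow> real \<Rightarrow> complex \<Rightarrow> complex" where
  "p_lin a b s = of_real a + of_real b * s"

definition m_fun :: "real \<Rightarrow> real \<Rightarrow> real \<Rightarrow> real \<Rightarrow> complex \<Rightarrow> complex" where
  "m_fun a1 b1 a2 b2 s =
     (let q = p_lin a1 b1 s + p_lin a2 b2 s
      in (s^2 + q) * csqrt (1 - 4 * p_lin a1 b1 s * p_lin a2 b2 s / (s^2 + q)^2))"

definition C1 :: "real \<Rightarrow> real \<Rightarrow> real \<Rightarrow> real \<Rightarrow> complex \<Rightarrow> complex" where
  "C1 a1 b1 a2 b2 s =
     (let q = p_lin a1 b1 s + p_lin a2 b2 s
      in ((s^2 + q) - m_fun a1 b1 a2 b2 s) / (2 * p_lin a2 b2 s))"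

end

theory Submission imports Defs begin

text \<open>
  Write \<open>z = s\<^sup>2 + q\<close>. Then \<open>C\<^sub>1 = z (1 - \<surd>(1 - x)) / (2 p\<^sub>2)\<close> with \<open>x = 4 p\<^sub>1 p\<^sub>2 / z\<^sup>2\<close>,
  and \<open>|1 - \<surd>(1 - x)| \<le> |x|\<close> because the principal root has nonnegative real part,
  so \<open>|C\<^sub>1| \<le> 2 |p\<^sub>1| / |z|\<close>. For the given splitting \<open>q = \<kappa> p\<close> does not depend on \<open>\<alpha>\<close>
  while \<open>p\<^sub>1 = \<kappa> p / (1 + \<alpha>)\<close>, and on the imaginary axis \<open>|p|\<close> is bounded by a constant
  multiple of \<open>|s\<^sup>2 + \<kappa> p|\<close>.
\<close>

lemma norm_one_minus_csqrt_le: "cmod (1 - csqrt (1 - x)) \<le> cmod x"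
proof -
  define r where "r = csqrt (1 - x)"
  have "Re (1 + r) \<ge> 1"
    unfolding r_def using Re_csqrt[of "1 - x"] by simp
  hence norm_ge_1: "cmod (1 + r) \<ge> 1"
    using complex_Re_le_cmod order_trans by blast
  have "(1 - r) * (1 + r) = x"
    using power2_csqrt[of "1 - x"] unfolding r_def by (simp add: algebra_simps power2_eq_square)
  hence "cmod x = cmod (1 - r) * cmod (1 + r)"
    by (metis norm_mult)
  also have "\<dots> \<ge> cmod (1 - r)"
    using norm_ge_1 by (metis mult_left_mono mult.right_neutral norm_ge_zero)
  finally show ?thesis
    unfolding r_def .
qed

lemma norm_small_root_le:
  fixes z p1 p2 :: complex
  assumes "z \<noteq> 0"
  shows "cmod ((z - z * csqrt (1 - 4 * p1 * p2 / z^2)) / (2 * p2)) \<le> 2 * cmod p1 / cmod z"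
proof (cases "p2 = 0")
  case False
  have "cmod ((z - z * csqrt (1 - 4 * p1 * p2 / z^2)) / (2 * p2))
        = cmod (z * (1 - csqrt (1 - 4 * p1 * p2 / z^2)) / (2 * p2))"
    by (simp add: algebra_simps)
  also have "\<dots> = cmod z * cmod (1 - csqrt (1 - 4 * p1 * p2 / z^2)) / (2 * cmod p2)"
    by (simp add: norm_mult norm_divide)
  also have "\<dots> \<le> cmod z * cmod (4 * p1 * p2 / z^2) / (2 * cmod p2)"
    by (intro divide_right_mono mult_left_mono norm_one_minus_csqrt_le) auto
  also have "\<dots> = 2 * cmod p1 / cmod z"
    using assms False by (simp add: norm_mult norm_divide norm_power field_simps power2_eq_square)
  finally show ?thesis .
qed simp

lemma norm_C1_le:
  assumes "s^2 + (p_lin a1 b1 s + p_lin a2 b2 s) \<noteq> 0"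
  shows "cmod (C1 a1 b1 a2 b2 s)
         \<le> 2 * cmod (p_lin a1 b1 s) / cmod (s^2 + (p_lin a1 b1 s + p_lin a2 b2 s))"
  using norm_small_root_le[OF assms, of "p_lin a1 b1 s" "p_lin a2 b2 s"]
  by (simp add: C1_def m_fun_def Let_def)

lemma p_lin_add: "p_lin a1 b1 s + p_lin a2 b2 s = p_lin (a1 + a2) (b1 + b2) s"
  by (simp add: p_lin_def algebra_simps)

lemma p_lin_scale: "p_lin (c * a) (c * b) s = of_real c * p_lin a b s"
  by (simp add: p_lin_def algebra_simps)

lemma linear_le_quadratic_on_real_line:
  fixes a b k w :: real
  assumes "a > 0" "b > 0" "k > 0"
  shows "a^2 + (b*w)^2 \<le> (5/k^2 + 2*a/(k^3*b^2)) * ((k*a - w^2)^2 + (k*b*w)^2)"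
proof -
  define D where "D = (k*a - w^2)^2 + (k*b*w)^2"
  have "(k*b*w)^2 \<le> D"
    by (simp add: D_def)
  hence imag_part: "(b*w)^2 \<le> D / k^2"
    using assms by (simp add: field_simps power_mult_distrib)
  have "0 \<le> 4/k^2 * D" "0 \<le> 2*a/(k^3*b^2) * D"
    using assms by (simp_all add: D_def)
  hence "a^2 \<le> 4/k^2 * D + 2*a/(k^3*b^2) * D"
  proof (cases "w^2 \<le> k*a/2")
    case True
    hence "k*a/2 \<le> k*a - w^2"
      by (simp add: mult.commute)
    hence "(k*a/2)^2 \<le> (k*a - w^2)^2"
      using assms by (intro power_mono) auto
    hence "(k*a/2)^2 \<le> D"
      unfolding D_def by (smt (verit) zero_le_power2)
    hence "a^2 \<le> 4/k^2 * D"
      using assms by (simp add: field_simps power2_eq_square)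
    with \<open>0 \<le> 2*a/(k^3*b^2) * D\<close> show ?thesis
      by linarith
  next
    case False
    have "(k*b)^2 * (k*a/2) \<le> (k*b)^2 * w^2"
      using False by (intro mult_left_mono) auto
    also have "\<dots> \<le> D"
      by (simp add: D_def power_mult_distrib)
    finally have "a^2 \<le> 2*a/(k^3*b^2) * D"
      using assms by (simp add: field_simps power2_eq_square power3_eq_cube)
    with \<open>0 \<le> 4/k^2 * D\<close> show ?thesis
      by linarith
  qed
  with imag_part have "a^2 + (b*w)^2 \<le> 4/k^2 * D + 2*a/(k^3*b^2) * D + D / k^2"
    by linarith
  thus ?thesis
    unfolding D_def[symmetric] by (simp add: field_simps)
qed

lemma norm_p_lin_imag_axis_le:
  fixes a b k w :: real
  assumes "a > 0" "b > 0" "k > 0"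
  shows "cmod (p_lin a b (\<i> * w))
         \<le> sqrt (5/k^2 + 2*a/(k^3*b^2)) * cmod ((\<i> * w)^2 + p_lin (k*a) (k*b) (\<i> * w))"
proof (rule power2_le_imp_le)
  have "(cmod (p_lin a b (\<i> * w)))^2 = a^2 + (b*w)^2"
    unfolding cmod_power2 by (simp add: p_lin_def power2_eq_square)
  moreover have "(cmod ((\<i> * w)^2 + p_lin (k*a) (k*b) (\<i> * w)))^2 = (k*a - w^2)^2 + (k*b*w)^2"
    unfolding cmod_power2 by (simp add: p_lin_def power2_eq_square)
  moreover have "0 \<le> 5/k^2 + 2*a/(k^3*b^2)"
    using assms by simp
  ultimately show "(cmod (p_lin a b (\<i> * w)))^2
      \<le> (sqrt (5/k^2 + 2*a/(k^3*b^2)) * cmod ((\<i> * w)^2 + p_lin (k*a) (k*b) (\<i> * w)))^2"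
    using linear_le_quadratic_on_real_line[OF assms, of w] by (simp add: power_mult_distrib)
qed (use assms in simp)

lemma norm_C1_split_imag_axis_le:
  fixes a b k \<alpha> w :: real
  assumes "a > 0" "b > 0" "k > 0" "\<alpha> > 0"
  shows "cmod (C1 (k*a/(1+\<alpha>)) (k*b/(1+\<alpha>)) (\<alpha>*(k*a/(1+\<alpha>))) (\<alpha>*(k*b/(1+\<alpha>))) (\<i> * w))
         \<le> 2 * k * sqrt (5/k^2 + 2*a/(k^3*b^2)) / (1+\<alpha>)"
proof -
  define M where "M = sqrt (5/k^2 + 2*a/(k^3*b^2))"
  define s where "s = \<i> * complex_of_real w"
  define z where "z = s^2 + p_lin (k*a) (k*b) s"
  have p_le: "cmod (p_lin a b s) \<le> M * cmod z"
    unfolding M_def s_def z_def using norm_p_lin_imag_axis_le[OF assms(1-3)] .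
  have "Re (p_lin a b s) = a"
    by (simp add: p_lin_def s_def)
  hence "cmod (p_lin a b s) > 0"
    using assms complex_Re_le_cmod[of "p_lin a b s"] by linarith
  hence z_nz: "z \<noteq> 0"
    using p_le by auto
  have split_sum: "x/(1+\<alpha>) + \<alpha>*(x/(1+\<alpha>)) = x" for x
  proof -
    have "x/(1+\<alpha>) + \<alpha>*(x/(1+\<alpha>)) = (1+\<alpha>) * (x/(1+\<alpha>))"
      by (simp only: distrib_right mult_1_left)
    thus ?thesis
      using assms by simp
  qed
  have q: "p_lin (k*a/(1+\<alpha>)) (k*b/(1+\<alpha>)) s + p_lin (\<alpha>*(k*a/(1+\<alpha>))) (\<alpha>*(k*b/(1+\<alpha>))) s
           = p_lin (k*a) (k*b) s"
    unfolding p_lin_add split_sum ..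
  have "cmod (C1 (k*a/(1+\<alpha>)) (k*b/(1+\<alpha>)) (\<alpha>*(k*a/(1+\<alpha>))) (\<alpha>*(k*b/(1+\<alpha>))) s)
        \<le> 2 * cmod (p_lin (k*a/(1+\<alpha>)) (k*b/(1+\<alpha>)) s) / cmod z"
    using norm_C1_le[of s "k*a/(1+\<alpha>)" "k*b/(1+\<alpha>)" "\<alpha>*(k*a/(1+\<alpha>))" "\<alpha>*(k*b/(1+\<alpha>))"] z_nz
    unfolding q z_def .
  also have "p_lin (k*a/(1+\<alpha>)) (k*b/(1+\<alpha>)) s = of_real (k/(1+\<alpha>)) * p_lin a b s"
    using p_lin_scale[of "k/(1+\<alpha>)" a b s] by simp
  also have "cmod (of_real (k/(1+\<alpha>)) * p_lin a b s) = k/(1+\<alpha>) * cmod (p_lin a b s)"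
    unfolding norm_mult norm_of_real using assms by simp
  also have "2 * (k/(1+\<alpha>) * cmod (p_lin a b s)) / cmod z \<le> 2 * (k/(1+\<alpha>) * (M * cmod z)) / cmod z"
    using p_le assms by (intro divide_right_mono mult_left_mono) auto
  also have "\<dots> = 2 * k * M / (1+\<alpha>)"
    using z_nz by simp
  finally show ?thesis
    unfolding s_def M_def .
qed

theorem lemma2:
  fixes a b \<kappa> :: real
  assumes "a > 0" and "b > 0" and "\<kappa> > 0"
  shows "\<exists>\<alpha>bar>0. \<forall>\<alpha>>\<alpha>bar.
           bdd_above ((\<lambda>\<omega>. cmod (C1 (\<kappa>*a/(1+\<alpha>)) (\<kappa>*b/(1+\<alpha>))
                   (\<alpha>*(\<kappa>*a/(1+\<alpha>))) (\<alpha>*(\<kappa>*b/(1+\<alpha>))) (\<i> * of_real \<omega>))) ` {0..}) \<and>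
           (SUP \<omega>\<in>{0..}. cmod (C1 (\<kappa>*a/(1+\<alpha>)) (\<kappa>*b/(1+\<alpha>))
                   (\<alpha>*(\<kappa>*a/(1+\<alpha>))) (\<alpha>*(\<kappa>*b/(1+\<alpha>))) (\<i> * of_real \<omega>))) < 1"
proof -
  define M where "M = sqrt (5/\<kappa>^2 + 2*a/(\<kappa>^3*b^2))"
  have M_pos: "M > 0"
    unfolding M_def using assms by (intro real_sqrt_gt_zero add_pos_pos) auto
  show ?thesis
  proof (intro exI[of _ "4*\<kappa>*M"] conjI allI impI)
    show "0 < 4*\<kappa>*M"
      using M_pos assms by simp
    fix \<alpha> :: real
    assume \<alpha>_gt: "4*\<kappa>*M < \<alpha>"
    hence \<alpha>_pos: "\<alpha> > 0"
      using M_pos assms by (smt (verit) mult_pos_pos)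
    have "2*\<kappa>*M / (1+\<alpha>) \<le> 1/2"
      using \<alpha>_gt \<alpha>_pos by (simp add: field_simps)
    hence half: "cmod (C1 (\<kappa>*a/(1+\<alpha>)) (\<kappa>*b/(1+\<alpha>)) (\<alpha>*(\<kappa>*a/(1+\<alpha>))) (\<alpha>*(\<kappa>*b/(1+\<alpha>)))
                  (\<i> * of_real \<omega>)) \<le> 1/2" for \<omega>
      using norm_C1_split_imag_axis_le[OF assms \<alpha>_pos, of \<omega>] unfolding M_def by linarith
    thus "bdd_above ((\<lambda>\<omega>. cmod (C1 (\<kappa>*a/(1+\<alpha>)) (\<kappa>*b/(1+\<alpha>))
                   (\<alpha>*(\<kappa>*a/(1+\<alpha>))) (\<alpha>*(\<kappa>*b/(1+\<alpha>))) (\<i> * of_real \<omega>))) ` {0..})"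
      by (intro bdd_aboveI[of _ "1/2"]) auto
    have "(SUP \<omega>\<in>{0::real..}. cmod (C1 (\<kappa>*a/(1+\<alpha>)) (\<kappa>*b/(1+\<alpha>))
                   (\<alpha>*(\<kappa>*a/(1+\<alpha>))) (\<alpha>*(\<kappa>*b/(1+\<alpha>))) (\<i> * of_real \<omega>))) \<le> 1/2"
      using half by (intro cSUP_least) auto
    thus "(SUP \<omega>\<in>{0::real..}. cmod (C1 (\<kappa>*a/(1+\<alpha>)) (\<kappa>*b/(1+\<alpha>))
                   (\<alpha>*(\<kappa>*a/(1+\<alpha>))) (\<alpha>*(\<kappa>*b/(1+\<alpha>))) (\<i> * of_real \<omega>))) < 1"
      by linarith
  qed
qed

end
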